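(* Let $\mathcal B=(B_1,\dots,B_d)$ be a splitting of order $d$ of $B_J\in\mathbb R^{n\times n}$. Then: if $\|B_J\|_\infty\le1$, then $\|T(\mathcal B)\|_\infty=\|B_J\|_\infty$; if $\|B_J\|_\infty>1$, then $\|B_J\|_\infty\le\|T(\mathcal B)\|_\infty\le\|B_J\|_\infty^d$.
   Context: For $B\in\mathbb R^{n\times n}$, a splitting of $B$ of order $d\ge1$ is an ordered $d$-tuple $\mathcal B=(B_1,\dots,B_d)$ of real $n\times n$ matrices with $B_p\neq O$ for all $p$, $\sum_{p=1}^d B_p=B$, and $B_p\circ B_q=O$ (Hadamard product) for $p\ne q$. The iteration matrix of $\mathcal B$ is the $dn\times dn$ matrix $T(\mathcal B)=(I_{dn}-\mathcal L)^{-1}\mathcal U$, where $\mathcal L,\mathcal U$ are $d\times d$ block matrices with $n\times n$ blocks, $\mathcal L_{ij}=B_j$ if $i>j$ and $O$ otherwise, $\mathcal U_{ij}=B_j$ if $i\le j$ and $O$ otherwise. $\|\cdot\|_\infty$ is the maximum-row-sum matrix norm. *)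

theory Defs
  imports "Jordan_Normal_Form.Matrix"
begin

(* Splittings are indexed p = 0..d-1 (paper: 1..d). *)
definition is_splitting :: "nat \<Rightarrow> nat \<Rightarrow> (nat \<Rightarrow> real mat) \<Rightarrow> real mat \<Rightarrow> bool" where
  "is_splitting n d B BJ \<longleftrightarrow>
     d \<ge> 1 \<and> BJ \<in> carrier_mat n n \<and>
     (\<forall>p<d. B p \<in> carrier_mat n n \<and> B p \<noteq> 0\<^sub>m n n) \<and>
     (\<forall>i<n. \<forall>j<n. BJ $$ (i,j) = (\<Sum>p<d. B p $$ (i,j))) \<and>
     (\<forall>p<d. \<forall>q<d. p \<noteq> q \<longrightarrow> (\<forall>i<n. \<forall>j<n. B p $$ (i,j) * B q $$ (i,j) = 0))"

(* block (i,j) of a (d n) x (d n) matrix occupies rows i*n..i*n+n-1, columns j*n..j*n+n-1 *)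
definition block_L :: "nat \<Rightarrow> nat \<Rightarrow> (nat \<Rightarrow> real mat) \<Rightarrow> real mat" where
  "block_L n d B = mat (d*n) (d*n) (\<lambda>(r,c). if r div n > c div n then B (c div n) $$ (r mod n, c mod n) else 0)"

definition block_U :: "nat \<Rightarrow> nat \<Rightarrow> (nat \<Rightarrow> real mat) \<Rightarrow> real mat" where
  "block_U n d B = mat (d*n) (d*n) (\<lambda>(r,c). if r div n \<le> c div n then B (c div n) $$ (r mod n, c mod n) else 0)"

definition mat_inv :: "nat \<Rightarrow> real mat \<Rightarrow> real mat" where
  "mat_inv N A = (SOME X. X \<in> carrier_mat N N \<and> inverts_mat A X \<and> inverts_mat X A)"

definition iter_mat :: "nat \<Rightarrow> nat \<Rightarrow> (nat \<Rightarrow> real mat) \<Rightarrow> real mat" where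
  "iter_mat n d B = mat_inv (d*n) (1\<^sub>m (d*n) - block_L n d B) * block_U n d B"

definition norm_inf :: "real mat \<Rightarrow> real" where
  "norm_inf A = Max ((\<lambda>i. \<Sum>j<dim_col A. \<bar>A $$ (i,j)\<bar>) ` {..<dim_row A})"

end

theory Submission
  imports Defs "Jordan_Normal_Form.Determinant"
begin

text \<open>The block matrix L is strictly block lower triangular, so I - L has determinant 1 and
T = (I - L)^-1 U is the solution of T = L T + U. A row of T in block row i thus has absolute
row sum at most that of U plus the row sums of earlier block rows of T weighted by the absolute
entries of L. Because the B_p have disjoint supports, the rows of |L| + |U| have exactly the
absolute row sums of B_J, and induction over the block rows bounds block row i of T by
||B_J|| max(1, ||B_J||)^i. Conversely, the first block row of T coincides with that of U,
whose absolute row sums are those of B_J.\<close>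

definition abs_row_sum :: "real mat \<Rightarrow> nat \<Rightarrow> real" where
  "abs_row_sum A i = (\<Sum>j<dim_col A. \<bar>A $$ (i,j)\<bar>)"

lemma norm_inf_eq_Max_abs_row_sum: "norm_inf A = Max (abs_row_sum A ` {..<dim_row A})"
  unfolding norm_inf_def abs_row_sum_def ..

lemma abs_row_sum_le_norm_inf: "i < dim_row A \<Longrightarrow> abs_row_sum A i \<le> norm_inf A"
  unfolding norm_inf_eq_Max_abs_row_sum by simp

lemma norm_inf_attained:
  assumes "0 < dim_row A"
  obtains i where "i < dim_row A" and "norm_inf A = abs_row_sum A i"
proof -
  have "Max (abs_row_sum A ` {..<dim_row A}) \<in> abs_row_sum A ` {..<dim_row A}"
    using assms by (intro Max_in) auto
  then show ?thesis using that unfolding norm_inf_eq_Max_abs_row_sum by auto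
qed

lemma norm_inf_nonneg:
  assumes "0 < dim_row A"
  shows "0 \<le> norm_inf A"
proof -
  have "0 \<le> abs_row_sum A 0" unfolding abs_row_sum_def by (simp add: sum_nonneg)
  also have "\<dots> \<le> norm_inf A" using assms by (rule abs_row_sum_le_norm_inf)
  finally show ?thesis .
qed

lemma sum_abs_eq_abs_sum_disjoint_support:
  fixes x :: "'a \<Rightarrow> 'b :: linordered_idom"
  assumes "finite P" and "\<And>p q. p \<in> P \<Longrightarrow> q \<in> P \<Longrightarrow> p \<noteq> q \<Longrightarrow> x p * x q = 0"
  shows "(\<Sum>p\<in>P. \<bar>x p\<bar>) = \<bar>\<Sum>p\<in>P. x p\<bar>"
proof (cases "\<exists>p0\<in>P. x p0 \<noteq> 0")
  case True
  then obtain p0 where p0: "p0 \<in> P" "x p0 \<noteq> 0" by auto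
  have "x p = 0" if "p \<in> P - {p0}" for p
    using assms(2)[of p p0] that p0 by auto
  then show ?thesis using p0 by (simp add: sum.remove[OF assms(1) p0(1)])
next
  case False
  then show ?thesis by simp
qed

lemma det_one_minus_strictly_lower_triangular:
  fixes L :: "'a :: comm_ring_1 mat"
  assumes L: "L \<in> carrier_mat N N" and upper_zero: "\<And>i j. i \<le> j \<Longrightarrow> j < N \<Longrightarrow> L $$ (i,j) = 0"
  shows "det (1\<^sub>m N - L) = 1"
proof -
  have "det (1\<^sub>m N - L) = prod_list (diag_mat (1\<^sub>m N - L))"
    using L upper_zero by (intro det_lower_triangular[of N]) (auto simp: minus_carrier_mat)
  also have "diag_mat (1\<^sub>m N - L) = replicate N 1"
    using L upper_zero by (intro nth_equalityI) (auto simp: diag_mat_def)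
  finally show ?thesis by (simp add: prod_list_replicate)
qed

lemma mat_inv_right_inverse:
  fixes A :: "real mat"
  assumes A: "A \<in> carrier_mat N N" and "det A \<noteq> 0"
  shows "mat_inv N A \<in> carrier_mat N N" and "A * mat_inv N A = 1\<^sub>m N"
proof -
  obtain X where "X \<in> carrier_mat N N" "X * A = 1\<^sub>m N" "A * X = 1\<^sub>m N"
    using det_non_zero_imp_unit[OF assms] unfolding Units_def ring_mat_def by auto
  then have "\<exists>X. X \<in> carrier_mat N N \<and> inverts_mat A X \<and> inverts_mat X A"
    using A unfolding inverts_mat_def by auto
  from someI_ex[OF this] show "mat_inv N A \<in> carrier_mat N N" "A * mat_inv N A = 1\<^sub>m N"
    using A unfolding mat_inv_def inverts_mat_def by auto
qed

lemma mat_inv_mult_fixpoint: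
  fixes L U :: "real mat"
  assumes L: "L \<in> carrier_mat N N" and U: "U \<in> carrier_mat N N"
    and det: "det (1\<^sub>m N - L) \<noteq> 0"
  defines "T \<equiv> mat_inv N (1\<^sub>m N - L) * U"
  shows "T = L * T + U"
proof -
  have A: "1\<^sub>m N - L \<in> carrier_mat N N" using L by (rule minus_carrier_mat)
  note Y = mat_inv_right_inverse[OF A det]
  have T: "T \<in> carrier_mat N N" unfolding T_def using Y(1) U by (rule mult_carrier_mat)
  have "(1\<^sub>m N - L) * T = ((1\<^sub>m N - L) * mat_inv N (1\<^sub>m N - L)) * U"
    unfolding T_def using A Y(1) U by (rule assoc_mult_mat[symmetric])
  also have "\<dots> = U" using U by (simp add: Y(2) left_mult_one_mat)
  finally have "1\<^sub>m N * T - L * T = U"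
    using minus_mult_distrib_mat[OF one_carrier_mat L T] by simp
  then have "T - L * T = U" using T by (simp add: left_mult_one_mat)
  show ?thesis
  proof (rule eq_matI)
    fix i j assume "i < dim_row (L * T + U)" "j < dim_col (L * T + U)"
    then have ij: "i < N" "j < N" using L U by auto
    have "(T - L * T) $$ (i,j) = U $$ (i,j)" using \<open>T - L * T = U\<close> by simp
    then show "T $$ (i,j) = (L * T + U) $$ (i,j)" using ij L T U by simp
  qed (use L T U in auto)
qed

lemma abs_row_sum_fixpoint_le:
  fixes T L U :: "real mat"
  assumes T: "T \<in> carrier_mat N N" and L: "L \<in> carrier_mat N N" and U: "U \<in> carrier_mat N N"
    and fixpoint: "T = L * T + U" and "r < N"
  shows "abs_row_sum T r \<le> (\<Sum>k<N. \<bar>L $$ (r,k)\<bar> * abs_row_sum T k) + (\<Sum>c<N. \<bar>U $$ (r,c)\<bar>)"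
proof -
  have "abs_row_sum T r \<le> (\<Sum>c<N. (\<Sum>k<N. \<bar>L $$ (r,k)\<bar> * \<bar>T $$ (k,c)\<bar>) + \<bar>U $$ (r,c)\<bar>)"
    unfolding abs_row_sum_def using T
  proof (simp only: carrier_matD, intro sum_mono)
    fix c assume "c \<in> {..<N}"
    from fixpoint have "T $$ (r,c) = (L * T + U) $$ (r,c)" by (rule arg_cong)
    also have "\<dots> = (\<Sum>k<N. L $$ (r,k) * T $$ (k,c)) + U $$ (r,c)"
      using \<open>c \<in> {..<N}\<close> T L U \<open>r < N\<close> by (auto simp: scalar_prod_def atLeast0LessThan)
    finally have "\<bar>T $$ (r,c)\<bar> \<le> \<bar>\<Sum>k<N. L $$ (r,k) * T $$ (k,c)\<bar> + \<bar>U $$ (r,c)\<bar>"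
      by (simp add: abs_triangle_ineq)
    also have "\<bar>\<Sum>k<N. L $$ (r,k) * T $$ (k,c)\<bar> \<le> (\<Sum>k<N. \<bar>L $$ (r,k)\<bar> * \<bar>T $$ (k,c)\<bar>)"
      using sum_abs[of "\<lambda>k. L $$ (r,k) * T $$ (k,c)" "{..<N}"] by (simp add: abs_mult)
    finally show "\<bar>T $$ (r,c)\<bar> \<le> (\<Sum>k<N. \<bar>L $$ (r,k)\<bar> * \<bar>T $$ (k,c)\<bar>) + \<bar>U $$ (r,c)\<bar>"
      by simp
  qed
  also have "\<dots> = (\<Sum>c<N. \<Sum>k<N. \<bar>L $$ (r,k)\<bar> * \<bar>T $$ (k,c)\<bar>) + (\<Sum>c<N. \<bar>U $$ (r,c)\<bar>)"
    by (rule sum.distrib)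
  also have "(\<Sum>c<N. \<Sum>k<N. \<bar>L $$ (r,k)\<bar> * \<bar>T $$ (k,c)\<bar>) = (\<Sum>k<N. \<bar>L $$ (r,k)\<bar> * abs_row_sum T k)"
    using T by (subst sum.swap) (simp add: abs_row_sum_def sum_distrib_left)
  finally show ?thesis .
qed

lemma abs_row_sum_fixpoint_le_power:
  fixes T L U :: "real mat" and lvl :: "nat \<Rightarrow> nat"
  assumes T: "T \<in> carrier_mat N N" and L: "L \<in> carrier_mat N N" and U: "U \<in> carrier_mat N N"
    and fixpoint: "T = L * T + U"
    and lower: "\<And>r k. r < N \<Longrightarrow> k < N \<Longrightarrow> L $$ (r,k) \<noteq> 0 \<Longrightarrow> lvl k < lvl r"
    and rows: "\<And>r. r < N \<Longrightarrow> (\<Sum>c<N. \<bar>L $$ (r,c)\<bar> + \<bar>U $$ (r,c)\<bar>) \<le> \<alpha>"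
    and "1 \<le> m" and "\<alpha> \<le> m"
  shows "r < N \<Longrightarrow> abs_row_sum T r \<le> \<alpha> * m ^ lvl r"
proof (induction "lvl r" arbitrary: r rule: less_induct)
  case less
  let ?i = "lvl r"
  have earlier: "\<bar>L $$ (r,k)\<bar> * abs_row_sum T k \<le> \<bar>L $$ (r,k)\<bar> * m ^ ?i" if "k < N" for k
  proof (cases "L $$ (r,k) = 0")
    case False
    then have "lvl k < ?i" using lower less.prems that by blast
    then have "abs_row_sum T k \<le> \<alpha> * m ^ lvl k" using less.hyps that by blast
    also have "\<dots> \<le> m * m ^ lvl k" using \<open>\<alpha> \<le> m\<close> \<open>1 \<le> m\<close> by (simp add: mult_right_mono)
    also have "\<dots> \<le> m ^ ?i"
      using \<open>lvl k < ?i\<close> \<open>1 \<le> m\<close> by (metis power_Suc power_increasing Suc_leI)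
    finally show ?thesis by (simp add: mult_left_mono)
  qed simp
  have "abs_row_sum T r \<le> (\<Sum>k<N. \<bar>L $$ (r,k)\<bar> * abs_row_sum T k) + (\<Sum>c<N. \<bar>U $$ (r,c)\<bar>)"
    by (rule abs_row_sum_fixpoint_le[OF T L U fixpoint less.prems])
  also have "\<dots> \<le> (\<Sum>k<N. \<bar>L $$ (r,k)\<bar> * m ^ ?i) + (\<Sum>c<N. \<bar>U $$ (r,c)\<bar> * m ^ ?i)"
    using earlier \<open>1 \<le> m\<close> by (intro add_mono sum_mono) (auto simp: mult_le_cancel_left1)
  also have "\<dots> = m ^ ?i * (\<Sum>c<N. \<bar>L $$ (r,c)\<bar> + \<bar>U $$ (r,c)\<bar>)"
    by (simp add: sum.distrib sum_distrib_left mult.commute distrib_left)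
  also have "\<dots> \<le> m ^ ?i * \<alpha>"
    using rows[OF less.prems] \<open>1 \<le> m\<close> by (intro mult_left_mono) auto
  finally show ?case by (simp add: mult.commute)
qed

lemma block_L_carrier [simp]: "block_L n d B \<in> carrier_mat (d*n) (d*n)"
  unfolding block_L_def by simp

lemma block_U_carrier [simp]: "block_U n d B \<in> carrier_mat (d*n) (d*n)"
  unfolding block_U_def by simp

lemma block_L_index [simp]:
  "r < d*n \<Longrightarrow> c < d*n \<Longrightarrow>
   block_L n d B $$ (r,c) = (if c div n < r div n then B (c div n) $$ (r mod n, c mod n) else 0)"
  unfolding block_L_def by simp

lemma block_U_index [simp]:
  "r < d*n \<Longrightarrow> c < d*n \<Longrightarrow>
   block_U n d B $$ (r,c) = (if r div n \<le> c div n then B (c div n) $$ (r mod n, c mod n) else 0)"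
  unfolding block_U_def by simp

lemma block_L_strictly_lower:
  "r < d*n \<Longrightarrow> c < d*n \<Longrightarrow> block_L n d B $$ (r,c) \<noteq> 0 \<Longrightarrow> c div n < r div n"
  by (auto split: if_splits)

lemma abs_block_L_add_abs_block_U:
  "r < d*n \<Longrightarrow> c < d*n \<Longrightarrow>
   \<bar>block_L n d B $$ (r,c)\<bar> + \<bar>block_U n d B $$ (r,c)\<bar> = \<bar>B (c div n) $$ (r mod n, c mod n)\<bar>"
  by simp

lemma det_one_minus_block_L: "det (1\<^sub>m (d*n) - block_L n d B) = 1"
  by (rule det_one_minus_strictly_lower_triangular) (auto simp: div_le_mono leD)

lemma iter_mat_carrier [simp]: "iter_mat n d B \<in> carrier_mat (d*n) (d*n)"
  unfolding iter_mat_def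
  by (intro mult_carrier_mat[OF mat_inv_right_inverse(1)] block_U_carrier)
    (simp_all add: minus_carrier_mat det_one_minus_block_L)

lemma iter_mat_fixpoint: "iter_mat n d B = block_L n d B * iter_mat n d B + block_U n d B"
  unfolding iter_mat_def by (intro mat_inv_mult_fixpoint) (simp_all add: det_one_minus_block_L)

lemma splitting_dim_pos:
  assumes "is_splitting n d B BJ"
  shows "0 < n"
proof (rule ccontr)
  assume "\<not> 0 < n"
  then have "B 0 \<in> carrier_mat 0 0" and "B 0 \<noteq> 0\<^sub>m 0 0"
    using assms unfolding is_splitting_def by auto
  moreover have "A = 0\<^sub>m 0 0" if "A \<in> carrier_mat 0 0" for A :: "real mat"
    using that by (intro eq_matI) auto
  ultimately show False by blast
qed

lemma splitting_abs_row_sum: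
  assumes split: "is_splitting n d B BJ" and "i < n"
  shows "(\<Sum>c<d*n. \<bar>B (c div n) $$ (i, c mod n)\<bar>) = abs_row_sum BJ i"
proof -
  have "(\<Sum>c<d*n. \<bar>B (c div n) $$ (i, c mod n)\<bar>) =
        (\<Sum>p<d. \<Sum>c\<in>{p*n..<p*n+n}. \<bar>B (c div n) $$ (i, c mod n)\<bar>)"
    by (rule sum.nat_group[symmetric])
  also have "\<dots> = (\<Sum>p<d. \<Sum>j<n. \<bar>B p $$ (i,j)\<bar>)"
  proof (rule sum.cong[OF refl])
    fix p
    have "(\<Sum>c\<in>{p*n..<p*n+n}. \<bar>B (c div n) $$ (i, c mod n)\<bar>) =
          (\<Sum>j<n. \<bar>B ((p*n+j) div n) $$ (i, (p*n+j) mod n)\<bar>)"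
      by (subst sum.atLeastLessThan_shift_0) (simp add: atLeast0LessThan comp_def)
    also have "\<dots> = (\<Sum>j<n. \<bar>B p $$ (i,j)\<bar>)"
      by (intro sum.cong refl) auto
    finally show "(\<Sum>c\<in>{p*n..<p*n+n}. \<bar>B (c div n) $$ (i, c mod n)\<bar>) = (\<Sum>j<n. \<bar>B p $$ (i,j)\<bar>)" .
  qed
  also have "\<dots> = (\<Sum>j<n. \<Sum>p<d. \<bar>B p $$ (i,j)\<bar>)"
    by (rule sum.swap)
  also have "\<dots> = (\<Sum>j<n. \<bar>BJ $$ (i,j)\<bar>)"
  proof (rule sum.cong[OF refl])
    fix j assume "j \<in> {..<n}"
    with split \<open>i < n\<close> have "(\<Sum>p<d. \<bar>B p $$ (i,j)\<bar>) = \<bar>\<Sum>p<d. B p $$ (i,j)\<bar>"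
      unfolding is_splitting_def by (intro sum_abs_eq_abs_sum_disjoint_support) auto
    also have "\<dots> = \<bar>BJ $$ (i,j)\<bar>"
      using split \<open>i < n\<close> \<open>j \<in> {..<n}\<close> unfolding is_splitting_def by simp
    finally show "(\<Sum>p<d. \<bar>B p $$ (i,j)\<bar>) = \<bar>BJ $$ (i,j)\<bar>" .
  qed
  also have "\<dots> = abs_row_sum BJ i"
    using split unfolding is_splitting_def abs_row_sum_def by auto
  finally show ?thesis .
qed

lemma norm_inf_iter_mat_le:
  assumes split: "is_splitting n d B BJ"
  shows "norm_inf (iter_mat n d B) \<le> norm_inf BJ * max 1 (norm_inf BJ) ^ (d - 1)"
proof -
  let ?T = "iter_mat n d B" and ?\<alpha> = "norm_inf BJ" and ?m = "max 1 (norm_inf BJ)"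
  have n: "0 < n" and d: "1 \<le> d" and BJ: "BJ \<in> carrier_mat n n"
    using split splitting_dim_pos unfolding is_splitting_def by auto
  have rows: "(\<Sum>c<d*n. \<bar>block_L n d B $$ (r,c)\<bar> + \<bar>block_U n d B $$ (r,c)\<bar>) \<le> ?\<alpha>"
    if "r < d*n" for r
  proof -
    have "(\<Sum>c<d*n. \<bar>block_L n d B $$ (r,c)\<bar> + \<bar>block_U n d B $$ (r,c)\<bar>) =
          (\<Sum>c<d*n. \<bar>B (c div n) $$ (r mod n, c mod n)\<bar>)"
      by (intro sum.cong refl abs_block_L_add_abs_block_U) (use that in auto)
    also have "\<dots> = abs_row_sum BJ (r mod n)"
      using n by (intro splitting_abs_row_sum[OF split]) simp
    also have "\<dots> \<le> ?\<alpha>" using BJ n by (intro abs_row_sum_le_norm_inf) simp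
    finally show ?thesis .
  qed
  have "0 < dim_row ?T" using n d by (simp add: carrier_matD[OF iter_mat_carrier])
  then obtain r where "r < dim_row ?T" and r_max: "norm_inf ?T = abs_row_sum ?T r"
    by (rule norm_inf_attained)
  then have r: "r < d*n" by (simp add: carrier_matD[OF iter_mat_carrier])
  have "abs_row_sum ?T r \<le> ?\<alpha> * ?m ^ (r div n)"
    by (rule abs_row_sum_fixpoint_le_power[OF iter_mat_carrier block_L_carrier block_U_carrier
        iter_mat_fixpoint block_L_strictly_lower rows _ _ r]) auto
  also have "\<dots> \<le> ?\<alpha> * ?m ^ (d - 1)"
  proof (intro mult_left_mono power_increasing)
    have "r div n < d" using r by (simp add: less_mult_imp_div_less)
    then show "r div n \<le> d - 1" by simp
    show "0 \<le> ?\<alpha>" using BJ n by (intro norm_inf_nonneg) simp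
  qed simp
  finally show ?thesis using r_max by simp
qed

lemma norm_inf_le_norm_inf_iter_mat:
  assumes split: "is_splitting n d B BJ"
  shows "norm_inf BJ \<le> norm_inf (iter_mat n d B)"
proof -
  let ?T = "iter_mat n d B" and ?L = "block_L n d B" and ?U = "block_U n d B"
  have n: "0 < n" and d: "1 \<le> d" and BJ: "BJ \<in> carrier_mat n n"
    using split splitting_dim_pos unfolding is_splitting_def by auto
  have "0 < dim_row BJ" using BJ n by simp
  then obtain i where "i < dim_row BJ" and i_max: "norm_inf BJ = abs_row_sum BJ i"
    by (rule norm_inf_attained)
  then have i: "i < n" using BJ by simp
  have "n \<le> d*n" using d by simp
  with i have "i < d*n" by linarith
  note dims = carrier_matD[OF iter_mat_carrier] carrier_matD[OF block_L_carrier]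
    carrier_matD[OF block_U_carrier]
  have first_row: "\<bar>?T $$ (i,c)\<bar> = \<bar>B (c div n) $$ (i, c mod n)\<bar>" if "c < d*n" for c
  proof -
    have "?T $$ (i,c) = (?L * ?T + ?U) $$ (i,c)"
      using arg_cong[where f = "\<lambda>A. A $$ (i,c)", OF iter_mat_fixpoint[of n d B]] .
    also have "\<dots> = (\<Sum>k<d*n. ?L $$ (i,k) * ?T $$ (k,c)) + ?U $$ (i,c)"
      using \<open>i < d*n\<close> that by (simp add: dims scalar_prod_def atLeast0LessThan)
    also have "(\<Sum>k<d*n. ?L $$ (i,k) * ?T $$ (k,c)) = 0"
      using \<open>i < d*n\<close> i by (intro sum.neutral) simp
    finally show ?thesis using \<open>i < d*n\<close> that i by simp
  qed
  have "norm_inf BJ = abs_row_sum BJ i" by (fact i_max)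
  also have "\<dots> = (\<Sum>c<d*n. \<bar>B (c div n) $$ (i, c mod n)\<bar>)"
    by (rule splitting_abs_row_sum[OF split i, symmetric])
  also have "\<dots> = abs_row_sum ?T i"
    unfolding abs_row_sum_def dims by (intro sum.cong refl first_row[symmetric]) simp
  also have "\<dots> \<le> norm_inf ?T"
    using \<open>i < d*n\<close> by (intro abs_row_sum_le_norm_inf) (simp add: dims)
  finally show ?thesis .
qed

theorem proposition4p1:
  fixes n d :: nat and B :: "nat \<Rightarrow> real mat" and BJ :: "real mat"
  assumes "is_splitting n d B BJ"
  shows "(norm_inf BJ \<le> 1 \<longrightarrow> norm_inf (iter_mat n d B) = norm_inf BJ) \<and>
         (norm_inf BJ > 1 \<longrightarrow> norm_inf BJ \<le> norm_inf (iter_mat n d B) \<and>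
                                norm_inf (iter_mat n d B) \<le> norm_inf BJ ^ d)"
proof -
  have d: "1 \<le> d" using assms unfolding is_splitting_def by simp
  note lower = norm_inf_le_norm_inf_iter_mat[OF assms]
  note upper = norm_inf_iter_mat_le[OF assms]
  have "norm_inf BJ * norm_inf BJ ^ (d - 1) = norm_inf BJ ^ d"
    using d by (cases d) simp_all
  then show ?thesis using lower upper by auto
qed

end
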